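(* Let $\theta_c,\theta_r\in\mathbb{R}^d\setminus\{0\}$, $\theta_0\in\mathbb{R}^d$, $\eta>0$, and integers $B,T\ge1$. Let $\theta_t$ be the mini-batch SGD iterates $\theta_{t+1}=\theta_t-\eta g_t$, where $g_t=\frac1B\sum_{i=1}^B\nabla_\theta\mathcal{L}_{\mathrm{pref}}(x^{(t,i)},y_c^{(t,i)},y_r^{(t,i)};\theta_t)$ with fresh i.i.d. $x^{(t,i)}\sim\mathcal{N}(0,I_d)$, and let $\bar\theta_t$ be the population iterates $\bar\theta_0=\theta_0$, $\bar\theta_{t+1}=\bar\theta_t-\eta\,\mathbb{E}[g_t]=\bar\theta_t+\frac{\eta}{\sqrt{2\pi}}v_\Delta$. Fix $\delta\in(0,1)$ and suppose $d>\frac14\ln(2BT/\delta)$. Then with probability at least $1-\delta$, $$\|\theta_T-\bar\theta_T\|_2\le\eta\left[\sqrt{\frac{2dT}{B}\ln\frac{2(d+1)}{\delta}}+4\sqrt d\,\ln\frac{2(d+1)}{\delta}\right].$$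
   Context: Pseudo-labels are $y_c=\mathbb{1}\{\langle\theta_c,x\rangle\ge0\}$, $y_r=\mathbb{1}\{\langle\theta_r,x\rangle\ge0\}$; the model is $p_\theta(y=1\mid x)=\sigma(\langle\theta,x\rangle)$ with $\sigma$ the logistic sigmoid; $\mathcal{L}_{\mathrm{pref}}(x,y_c,y_r;\theta):=-(\log p_\theta(y_c\mid x)-\log p_\theta(y_r\mid x))$; $v_\Delta:=\theta_c/\|\theta_c\|_2-\theta_r/\|\theta_r\|_2$. *)

theory Defs
  imports "HOL-Probability.Probability"
begin

definition sigmoid :: "real \<Rightarrow> real" where
  "sigmoid z = 1 / (1 + exp (- z))"

text \<open>Pseudo-label y = 1{<theta,x> >= 0}, with label 1 encoded as True.\<close>
definition pseudo_label :: "real^'d \<Rightarrow> real^'d \<Rightarrow> bool" where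
  "pseudo_label \<theta> x = (\<theta> \<bullet> x \<ge> 0)"

definition model_prob :: "real^'d \<Rightarrow> real^'d \<Rightarrow> bool \<Rightarrow> real" where
  "model_prob \<theta> x y = (if y then sigmoid (\<theta> \<bullet> x) else 1 - sigmoid (\<theta> \<bullet> x))"

definition L_pref :: "real^'d \<Rightarrow> bool \<Rightarrow> bool \<Rightarrow> real^'d \<Rightarrow> real" where
  "L_pref x yc yr \<theta> = - (ln (model_prob \<theta> x yc) - ln (model_prob \<theta> x yr))"

definition grad :: "(real^'d \<Rightarrow> real) \<Rightarrow> real^'d \<Rightarrow> real^'d" where
  "grad f \<theta> = (THE D. GDERIV f \<theta> :> D)"

definition batch_grad ::
  "real^'d \<Rightarrow> real^'d \<Rightarrow> nat \<Rightarrow> (nat \<Rightarrow> nat \<Rightarrow> real^'d) \<Rightarrow> nat \<Rightarrow> real^'d \<Rightarrow> real^'d" where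
  "batch_grad \<theta>c \<theta>r B X t \<theta> =
     (1 / real B) *\<^sub>R (\<Sum>i<B. grad (L_pref (X t i) (pseudo_label \<theta>c (X t i)) (pseudo_label \<theta>r (X t i))) \<theta>)"

primrec sgd ::
  "real^'d \<Rightarrow> real^'d \<Rightarrow> real \<Rightarrow> nat \<Rightarrow> real^'d \<Rightarrow> (nat \<Rightarrow> nat \<Rightarrow> real^'d) \<Rightarrow> nat \<Rightarrow> real^'d" where
  "sgd \<theta>c \<theta>r \<eta> B \<theta>0 X 0 = \<theta>0"
| "sgd \<theta>c \<theta>r \<eta> B \<theta>0 X (Suc t) =
     sgd \<theta>c \<theta>r \<eta> B \<theta>0 X t - \<eta> *\<^sub>R batch_grad \<theta>c \<theta>r B X t (sgd \<theta>c \<theta>r \<eta> B \<theta>0 X t)"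

definition v_Delta :: "real^'d \<Rightarrow> real^'d \<Rightarrow> real^'d" where
  "v_Delta \<theta>c \<theta>r = (1 / norm \<theta>c) *\<^sub>R \<theta>c - (1 / norm \<theta>r) *\<^sub>R \<theta>r"

primrec pop_iter :: "real^'d \<Rightarrow> real^'d \<Rightarrow> real \<Rightarrow> real^'d \<Rightarrow> nat \<Rightarrow> real^'d" where
  "pop_iter \<theta>c \<theta>r \<eta> \<theta>0 0 = \<theta>0"
| "pop_iter \<theta>c \<theta>r \<eta> \<theta>0 (Suc t) =
     pop_iter \<theta>c \<theta>r \<eta> \<theta>0 t + (\<eta> / sqrt (2 * pi)) *\<^sub>R v_Delta \<theta>c \<theta>r"

definition std_gauss_density :: "real^'d \<Rightarrow> real" where
  "std_gauss_density v = (2 * pi) powr (- real CARD('d) / 2) * exp (- (norm v)\<^sup>2 / 2)"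

end

theory Submission
  imports Defs
begin

(* The pseudo-labels do not depend on theta, so L_pref is linear in theta and its gradient
   is the constant -(1{<theta_c,x> >= 0} - 1{<theta_r,x> >= 0}) x. Hence SGD is a random walk:
   theta_T - bar theta_T is eta/B times a sum of N = T B i.i.d. centred steps w - E w, and
   E w = v_Delta / sqrt (2 pi) by the half-space mean of a standard Gaussian. Each coordinate
   of w is dominated in absolute value by a standard normal coordinate of x, which gives
   E exp (l (w - E w)_j) <= exp (l^2/2 + 2 l^3) for 0 <= l <= 1/4. A Chernoff bound and a union
   bound over the 2d signed coordinates show that, with probability at least 1 - 2d exp (-L),
   every coordinate sum is at most sqrt (2 N L) + 4 L in absolute value, so the Euclidean norm
   is at most sqrt d times that; L = ln (2 (d + 1) / delta) gives the claim. *)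

section \<open>SGD on the preference loss is a random walk\<close>

lemma ln_sigmoid_minus_ln_one_minus: "ln (sigmoid z) - ln (1 - sigmoid z) = z"
proof -
  have pos: "0 < 1 + exp (- z)" by (simp add: add_pos_pos)
  have "1 - sigmoid z = exp (- z) / (1 + exp (- z))"
    unfolding sigmoid_def using pos by (simp add: field_simps)
  then show ?thesis using pos by (simp add: sigmoid_def ln_div)
qed

lemma L_pref_linear: "L_pref x yc yr \<theta> = (of_bool yr - of_bool yc) * (\<theta> \<bullet> x)"
  using ln_sigmoid_minus_ln_one_minus[of "\<theta> \<bullet> x"]
  by (cases yc; cases yr) (auto simp: L_pref_def model_prob_def)

lemma grad_scaled_inner: "grad (\<lambda>\<theta>. c * (\<theta> \<bullet> x)) \<theta> = c *\<^sub>R (x :: real^'d)"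
  unfolding grad_def
proof (rule the_equality)
  show deriv: "GDERIV (\<lambda>\<theta>. c * (\<theta> \<bullet> x)) \<theta> :> c *\<^sub>R x"
    unfolding gderiv_def
    by (rule has_derivative_eq_rhs, (rule derivative_eq_intros)+) (auto simp: algebra_simps)
  fix D assume "GDERIV (\<lambda>\<theta>. c * (\<theta> \<bullet> x)) \<theta> :> D"
  then have "(\<lambda>h. h \<bullet> D) = (\<lambda>h. h \<bullet> (c *\<^sub>R x))"
    using deriv unfolding gderiv_def by (rule has_derivative_unique)
  then have "(D - c *\<^sub>R x) \<bullet> (D - c *\<^sub>R x) = 0"
    by (metis inner_diff_right right_minus_eq)
  then show "D = c *\<^sub>R x" by simp
qed

lemma grad_L_pref: "grad (L_pref x yc yr) \<theta> = (of_bool yr - of_bool yc) *\<^sub>R x"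
  unfolding L_pref_linear[abs_def] by (rule grad_scaled_inner)

definition pref_step :: "real^'d \<Rightarrow> real^'d \<Rightarrow> real^'d \<Rightarrow> real^'d" where
  "pref_step \<theta>c \<theta>r x = (if \<theta>c \<bullet> x \<ge> 0 then x else 0) - (if \<theta>r \<bullet> x \<ge> 0 then x else 0)"

definition pref_step_mean :: "real^'d \<Rightarrow> real^'d \<Rightarrow> real^'d" where
  "pref_step_mean \<theta>c \<theta>r = (1 / sqrt (2 * pi)) *\<^sub>R v_Delta \<theta>c \<theta>r"

lemma pref_step_measurable[measurable]: "pref_step \<theta>c \<theta>r \<in> borel_measurable borel"
  unfolding pref_step_def[abs_def] by measurable

lemma pref_step_component_measurable[measurable]:
  "(\<lambda>x. pref_step \<theta>c \<theta>r x $ j) \<in> borel_measurable borel"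
  unfolding cart_eq_inner_axis by measurable

lemma batch_grad_eq:
  "batch_grad \<theta>c \<theta>r B X t \<theta> = - (1 / real B) *\<^sub>R (\<Sum>i<B. pref_step \<theta>c \<theta>r (X t i))"
proof -
  have "grad (L_pref x (pseudo_label \<theta>c x) (pseudo_label \<theta>r x)) \<theta> = - pref_step \<theta>c \<theta>r x" for x
    by (simp add: grad_L_pref pseudo_label_def pref_step_def)
  then show ?thesis by (simp add: batch_grad_def sum_negf)
qed

lemma sgd_closed_form:
  "sgd \<theta>c \<theta>r \<eta> B \<theta>0 X T = \<theta>0 + (\<eta> / real B) *\<^sub>R (\<Sum>t<T. \<Sum>i<B. pref_step \<theta>c \<theta>r (X t i))"
  by (induction T) (simp_all add: batch_grad_eq algebra_simps)

lemma pop_iter_closed_form: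
  "pop_iter \<theta>c \<theta>r \<eta> \<theta>0 T = \<theta>0 + (real T * \<eta>) *\<^sub>R pref_step_mean \<theta>c \<theta>r"
proof (induction T)
  case (Suc T)
  then show ?case
    by (simp add: pref_step_mean_def algebra_simps add_divide_distrib flip: scaleR_add_left)
qed simp

lemma sgd_minus_pop_iter:
  assumes "B \<ge> 1"
  shows "sgd \<theta>c \<theta>r \<eta> B \<theta>0 X T - pop_iter \<theta>c \<theta>r \<eta> \<theta>0 T
    = (\<eta> / real B) *\<^sub>R (\<Sum>k\<in>{..<T} \<times> {..<B}. pref_step \<theta>c \<theta>r (case_prod X k) - pref_step_mean \<theta>c \<theta>r)"
proof -
  have "(\<Sum>k\<in>{..<T} \<times> {..<B}. pref_step \<theta>c \<theta>r (case_prod X k) - pref_step_mean \<theta>c \<theta>r)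
      = (\<Sum>t<T. \<Sum>i<B. pref_step \<theta>c \<theta>r (X t i)) - (real T * real B) *\<^sub>R pref_step_mean \<theta>c \<theta>r"
    by (simp add: sum_subtractf sum.cartesian_product split_beta card_cartesian_product
        sum_constant_scaleR del: sum_constant)
  then show ?thesis
    using assms by (simp add: sgd_closed_form pop_iter_closed_form scaleR_diff_right)
qed

lemma sgd_measurable:
  assumes "\<And>t i. t < T \<Longrightarrow> i < B \<Longrightarrow> X t i \<in> borel_measurable M"
  shows "(\<lambda>\<omega>. sgd \<theta>c \<theta>r \<eta> B \<theta>0 (\<lambda>t i. X t i \<omega>) T) \<in> borel_measurable M"
  unfolding sgd_closed_form
  using assms by (intro borel_measurable_add borel_measurable_scaleR borel_measurable_sum
      measurable_compose[OF _ pref_step_measurable]) auto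

section \<open>The standard Gaussian measure on real^'d\<close>

definition std_normal :: "real measure" where
  "std_normal = density lborel (\<lambda>t. ennreal (std_normal_density t))"

definition std_gauss :: "(real^'d) measure" where
  "std_gauss = density lborel (\<lambda>x. ennreal (std_gauss_density x))"

lemma sets_std_normal[simp, measurable_cong]: "sets std_normal = sets borel"
  and space_std_normal[simp]: "space std_normal = UNIV"
  by (simp_all add: std_normal_def)

lemma sets_std_gauss[simp, measurable_cong]: "sets std_gauss = sets borel"
  and space_std_gauss[simp]: "space std_gauss = UNIV"
  by (simp_all add: std_gauss_def)

lemma prob_space_std_normal: "prob_space std_normal"
  unfolding std_normal_def by (rule prob_space_normal_density) simp

lemma prod_Basis_vec: "(\<Prod>b\<in>(Basis :: (real^'d) set). h b) = (\<Prod>j\<in>UNIV. h (axis j 1))"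
proof -
  have Basis: "(Basis :: (real^'d) set) = range (\<lambda>j. axis j 1)"
    unfolding Basis_vec_def by auto
  have "inj (\<lambda>j::'d. axis j (1::real))"
    by (auto simp: inj_def axis_eq_axis)
  then show ?thesis unfolding Basis by (simp add: prod.reindex)
qed

lemma std_gauss_density_eq_prod:
  "std_gauss_density (x :: real^'d) = (\<Prod>j\<in>UNIV. std_normal_density (x $ j))"
proof -
  have norm_sq: "(norm x)\<^sup>2 = (\<Sum>j\<in>UNIV. (x $ j)\<^sup>2)"
    unfolding power2_norm_eq_inner inner_vec_def by (simp add: power2_eq_square)
  have "(2 * pi) powr (- real CARD('d) / 2) = ((2 * pi) powr (- (1 / 2))) powr real CARD('d)"
    unfolding powr_powr by (simp add: field_simps)
  also have "\<dots> = ((2 * pi) powr (- (1 / 2))) ^ CARD('d)"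
    by (rule powr_realpow) simp
  also have "(2 * pi) powr (- (1 / 2)) = 1 / sqrt (2 * pi)"
    by (simp add: powr_minus powr_half_sqrt inverse_eq_divide)
  finally have const: "(2 * pi) powr (- real CARD('d) / 2) = (\<Prod>j\<in>(UNIV::'d set). 1 / sqrt (2 * pi))"
    by simp
  have exps: "(\<Prod>j\<in>UNIV. exp (- (x $ j)\<^sup>2 / 2)) = exp (- (norm x)\<^sup>2 / 2)"
    by (simp add: exp_sum norm_sq sum_divide_distrib flip: sum_negf)
  have "(\<Prod>j\<in>UNIV. std_normal_density (x $ j))
      = (\<Prod>j\<in>(UNIV::'d set). 1 / sqrt (2 * pi)) * (\<Prod>j\<in>UNIV. exp (- (x $ j)\<^sup>2 / 2))"
    unfolding std_normal_density_def by (rule prod.distrib)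
  then show ?thesis
    unfolding std_gauss_density_def const exps by simp
qed

lemma borel_measurable_std_gauss_density[measurable]: "std_gauss_density \<in> borel_measurable borel"
  unfolding std_gauss_density_def by measurable

lemma emeasure_std_gauss_box:
  assumes A: "\<And>j. A j \<in> sets borel"
  shows "emeasure std_gauss {x :: real^'d. \<forall>j. x $ j \<in> A j} = (\<Prod>j\<in>UNIV. emeasure std_normal (A j))"
proof -
  define index :: "real^'d \<Rightarrow> 'd" where "index b = (SOME j. b = axis j 1)" for b
  have index_axis: "index (axis j 1) = j" for j
    unfolding index_def by (rule some_equality) (auto simp: axis_eq_axis)
  define F where "F b t = ennreal (std_normal_density t) * indicator (A (index b)) t" for b t
  have box: "{x :: real^'d. \<forall>j. x $ j \<in> A j} = (\<Inter>j. (\<lambda>x. x $ j) -` A j)"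
    by auto
  have "emeasure std_gauss {x. \<forall>j. x $ j \<in> A j}
      = (\<integral>\<^sup>+x. ennreal (std_gauss_density x) * indicator {x :: real^'d. \<forall>j. x $ j \<in> A j} x \<partial>lborel)"
    unfolding std_gauss_def box using A
    by (subst emeasure_density) (auto intro!: sets.countable_INT measurable_sets_borel[OF _ A])
  also have "\<dots> = (\<integral>\<^sup>+x. (\<Prod>b\<in>Basis. F b (x \<bullet> b)) \<partial>lborel)"
  proof (rule nn_integral_cong)
    fix x :: "real^'d"
    have "(\<Prod>b\<in>Basis. F b (x \<bullet> b))
        = (\<Prod>j\<in>UNIV. ennreal (std_normal_density (x $ j))) * (\<Prod>j\<in>UNIV. indicator (A j) (x $ j))"
      unfolding prod_Basis_vec F_def by (simp add: index_axis inner_axis prod.distrib)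
    also have "\<dots> = ennreal (std_gauss_density x) * indicator {x :: real^'d. \<forall>j. x $ j \<in> A j} x"
      by (simp add: std_gauss_density_eq_prod prod_ennreal indicator_def prod_zero_iff)
    finally show "ennreal (std_gauss_density x) * indicator {x. \<forall>j. x $ j \<in> A j} x
        = (\<Prod>b\<in>Basis. F b (x \<bullet> b))"
      by simp
  qed
  also have "\<dots> = (\<Prod>b\<in>Basis. (\<integral>\<^sup>+t. F b t \<partial>lborel))"
    using A[measurable] by (intro nn_integral_lborel_prod) (auto simp: F_def)
  also have "\<dots> = (\<Prod>j\<in>UNIV. emeasure std_normal (A j))"
    unfolding prod_Basis_vec F_def index_axis std_normal_def using A by (simp add: emeasure_density)
  finally show ?thesis .
qed

lemma prob_space_std_gauss: "prob_space (std_gauss :: (real^'d) measure)"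
proof
  have "emeasure (std_gauss :: (real^'d) measure) {x. \<forall>j. x $ j \<in> UNIV} = 1"
    using emeasure_std_gauss_box[of "\<lambda>_. UNIV"] prob_space.emeasure_space_1[OF prob_space_std_normal]
    by simp
  then show "emeasure (std_gauss :: (real^'d) measure) (space std_gauss) = 1" by simp
qed

lemma distr_std_gauss_coord: "distr (std_gauss :: (real^'d) measure) borel (\<lambda>x. x $ j) = std_normal"
proof (rule measure_eqI)
  fix A :: "real set" assume "A \<in> sets (distr std_gauss borel (\<lambda>x. x $ j))"
  then have A: "A \<in> sets borel" by simp
  have "(\<lambda>x :: real^'d. x $ j) -` A = {x. \<forall>k. x $ k \<in> (if k = j then A else UNIV)}"
    by auto
  then have "emeasure (distr (std_gauss :: (real^'d) measure) borel (\<lambda>x. x $ j)) A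
      = (\<Prod>k\<in>UNIV. emeasure std_normal (if k = j then A else UNIV))"
    using A by (simp add: emeasure_distr emeasure_std_gauss_box)
  also have "\<dots> = (\<Prod>k\<in>UNIV. if k = j then emeasure std_normal A else 1)"
    using prob_space.emeasure_space_1[OF prob_space_std_normal] by (intro prod.cong) auto
  also have "\<dots> = emeasure std_normal A"
    by (simp add: prod.delta)
  finally show "emeasure (distr std_gauss borel (\<lambda>x. x $ j)) A = emeasure std_normal A" .
qed simp

lemma distributed_std_gauss_coord:
  "distributed (std_gauss :: (real^'d) measure) lborel (\<lambda>x. x $ j) std_normal_density"
proof -
  have "distr (std_gauss :: (real^'d) measure) lborel (\<lambda>x. x $ j) = distr std_gauss borel (\<lambda>x. x $ j)"
    by (rule distr_cong) auto
  then show ?thesis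
    unfolding distributed_def using distr_std_gauss_coord[of j] by (simp add: std_normal_def)
qed

lemma indep_vars_std_gauss_coords:
  "prob_space.indep_vars (std_gauss :: (real^'d) measure) (\<lambda>_. borel) (\<lambda>j x. x $ j) UNIV"
proof -
  interpret G: prob_space "std_gauss :: (real^'d) measure" by (rule prob_space_std_gauss)
  interpret N: prob_space std_normal by (rule prob_space_std_normal)
  interpret P: product_sigma_finite "\<lambda>_::'d. std_normal" by unfold_locales
  have "distr std_gauss (\<Pi>\<^sub>M j\<in>UNIV. borel) (\<lambda>x. \<lambda>j\<in>UNIV. x $ j) = (\<Pi>\<^sub>M j\<in>(UNIV::'d set). std_normal)"
  proof (rule P.PiM_eqI)
    show "sets (distr std_gauss (\<Pi>\<^sub>M j\<in>UNIV. borel) (\<lambda>x. \<lambda>j\<in>UNIV. x $ j))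
        = sets (\<Pi>\<^sub>M j\<in>(UNIV::'d set). std_normal)"
      unfolding sets_distr by (rule sets_PiM_cong) simp_all
    fix A assume A: "\<And>i. i \<in> (UNIV::'d set) \<Longrightarrow> A i \<in> sets std_normal"
    have "(\<lambda>x. \<lambda>j\<in>UNIV. x $ j) -` (Pi\<^sub>E UNIV A) \<inter> space std_gauss = {x :: real^'d. \<forall>j. x $ j \<in> A j}"
      by auto
    with A show "emeasure (distr std_gauss (\<Pi>\<^sub>M j\<in>UNIV. borel) (\<lambda>x. \<lambda>j\<in>UNIV. x $ j)) (Pi\<^sub>E UNIV A)
        = (\<Prod>j\<in>UNIV. emeasure std_normal (A j))"
      by (subst emeasure_distr)
        (auto intro!: measurable_restrict sets_PiM_I_finite emeasure_std_gauss_box)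
  qed simp
  then show ?thesis
    by (subst G.indep_vars_iff_distr_eq_PiM) (auto simp: distr_std_gauss_coord)
qed

lemma distributed_std_gauss_inner:
  assumes v: "(v :: real^'d) \<noteq> 0"
  shows "distributed std_gauss lborel (\<lambda>x. v \<bullet> x) (normal_density 0 (norm v))"
proof -
  interpret G: prob_space "std_gauss :: (real^'d) measure" by (rule prob_space_std_gauss)
  \<comment> \<open>\<open>sum_indep_normal\<close> needs positive variances, so sum over the support of \<open>v\<close> only.\<close>
  define J where "J = {j. v $ j \<noteq> 0}"
  have J: "finite J" "J \<noteq> {}" using v unfolding J_def by (auto simp: vec_eq_iff)
  have indep: "G.indep_vars (\<lambda>_. borel) (\<lambda>j x. v $ j * x $ j) J"
    by (rule G.indep_vars_compose2[OF G.indep_vars_subset[OF indep_vars_std_gauss_coords]]) auto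
  have dist: "distributed std_gauss lborel (\<lambda>x. v $ j * x $ j) (normal_density 0 \<bar>v $ j\<bar>)"
    if "j \<in> J" for j
    using G.normal_density_affine[OF distributed_std_gauss_coord[of j], of "v $ j" 0] that
    by (simp add: J_def)
  have "distributed std_gauss lborel (\<lambda>x. \<Sum>j\<in>J. v $ j * x $ j)
      (normal_density 0 (sqrt (\<Sum>j\<in>J. \<bar>v $ j\<bar>\<^sup>2)))"
    using G.sum_indep_normal[OF J indep _ dist] by (simp add: J_def)
  moreover have "(\<Sum>j\<in>J. v $ j * x $ j) = v \<bullet> x" for x :: "real^'d"
    unfolding inner_vec_def inner_real_def by (rule sum.mono_neutral_left) (auto simp: J_def)
  moreover have "(\<Sum>j\<in>J. \<bar>v $ j\<bar>\<^sup>2) = (\<Sum>j\<in>UNIV. (v $ j)\<^sup>2)"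
    unfolding power2_abs by (rule sum.mono_neutral_left) (auto simp: J_def)
  ultimately show ?thesis by (simp add: norm_vec_def L2_set_def)
qed

section \<open>Half-space means\<close>

lemma has_bochner_integral_normal_pos_part:
  assumes "0 < \<sigma>"
  shows "has_bochner_integral lborel (\<lambda>t. normal_density 0 \<sigma> t * max t 0) (\<sigma> / sqrt (2 * pi))"
proof -
  have abs: "has_bochner_integral lborel (\<lambda>t. normal_density 0 \<sigma> t * \<bar>t\<bar>) (\<sigma> * sqrt (2 / pi))"
    using normal_moment_abs_odd[of \<sigma> 0 0] assms by simp
  have id: "has_bochner_integral lborel (\<lambda>t. normal_density 0 \<sigma> t * t) 0"
    by (rule normal_moment_nz_1) (use assms in simp)
  have "(\<lambda>t. normal_density 0 \<sigma> t * max t 0)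
      = (\<lambda>t. (normal_density 0 \<sigma> t * \<bar>t\<bar> + normal_density 0 \<sigma> t * t) / 2)"
    by (auto simp: max_def field_simps)
  moreover have "\<sigma> / sqrt (2 * pi) = (\<sigma> * sqrt (2 / pi) + 0) / 2"
    by (simp add: real_sqrt_divide real_sqrt_mult field_simps)
  ultimately show ?thesis
    using abs id by (simp only:) (intro has_bochner_integral_divide_zero has_bochner_integral_add)
qed

lemma integral_std_gauss_inner_pos_part:
  "(\<integral>x. max (v \<bullet> x) 0 \<partial>(std_gauss :: (real^'d) measure)) = norm v / sqrt (2 * pi)"
proof (cases "v = 0")
  case False
  have "(\<integral>x. max (v \<bullet> x) 0 \<partial>std_gauss) = (\<integral>t. normal_density 0 (norm v) t * max t 0 \<partial>lborel)"
    by (rule distributed_integral[OF distributed_std_gauss_inner[OF False], symmetric]) auto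
  also have "\<dots> = norm v / sqrt (2 * pi)"
    using has_bochner_integral_normal_pos_part False by (simp add: has_bochner_integral_integral_eq)
  finally show ?thesis .
qed simp

lemma eq_scaleR_if_inner_le_norm:
  fixes g u :: "'a::real_inner"
  assumes le: "\<And>v. v \<bullet> g \<le> c * norm v" and eq: "u \<bullet> g = c * norm u" and "u \<noteq> 0"
  shows "g = (c / norm u) *\<^sub>R u"
proof -
  have "0 \<le> c" using le[of "- u"] eq \<open>u \<noteq> 0\<close> by (simp add: zero_le_mult_iff)
  have "norm g * norm g \<le> c * norm g"
    using le[of g] by (simp add: power2_norm_eq_inner[symmetric] power2_eq_square)
  then have "norm g \<le> c"
    using \<open>0 \<le> c\<close> by (cases "g = 0") simp_all
  have "(norm (g - (c / norm u) *\<^sub>R u))\<^sup>2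
      = g \<bullet> g - 2 * (c / norm u) * (u \<bullet> g) + (c / norm u) * (c / norm u) * (u \<bullet> u)"
    by (simp add: power2_norm_eq_inner inner_diff_left inner_diff_right inner_commute algebra_simps)
  also have "\<dots> = norm g * norm g - c * c"
    using \<open>u \<noteq> 0\<close> by (simp add: eq power2_norm_eq_inner[symmetric] power2_eq_square field_simps)
  also have "\<dots> \<le> 0"
    using mult_mono[OF \<open>norm g \<le> c\<close> \<open>norm g \<le> c\<close>] \<open>0 \<le> c\<close> by simp
  finally show ?thesis by simp
qed

lemma integrable_std_gauss_half_space:
  "integrable (std_gauss :: (real^'d) measure) (\<lambda>x. if u \<bullet> x \<ge> 0 then x else 0)"
proof -
  have "integrable std_gauss (\<lambda>x :: real^'d. \<bar>x $ j\<bar>)" for j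
    using distributed_integrable[OF distributed_std_gauss_coord[of j], of abs]
      integrable_std_normal_moment_abs[of 1]
    by simp
  then have "integrable std_gauss (\<lambda>x :: real^'d. \<Sum>j\<in>UNIV. \<bar>x $ j\<bar>)"
    by (rule Bochner_Integration.integrable_sum)
  then show ?thesis
    by (rule Bochner_Integration.integrable_bound) (auto intro!: AE_I2 order_trans[OF norm_le_l1_cart])
qed

lemma integral_std_gauss_half_space:
  assumes "u \<noteq> 0"
  shows "(\<integral>x. (if u \<bullet> x \<ge> 0 then x else 0) \<partial>(std_gauss :: (real^'d) measure))
    = (1 / (norm u * sqrt (2 * pi))) *\<^sub>R u"
proof -
  have inner_if: "v \<bullet> (if w \<bullet> x \<ge> 0 then x else 0) = (if w \<bullet> x \<ge> 0 then v \<bullet> x else 0)"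
    for v w x :: "real^'d"
    by simp
  have int: "integrable std_gauss (\<lambda>x. if w \<bullet> x \<ge> 0 then v \<bullet> x else 0)" for v w :: "real^'d"
    using integrable_inner_right[OF integrable_std_gauss_half_space, of v w] by (simp only: inner_if)
  have inner: "v \<bullet> (\<integral>x. (if w \<bullet> x \<ge> 0 then x else 0) \<partial>std_gauss)
      = (\<integral>x. (if w \<bullet> x \<ge> 0 then v \<bullet> x else 0) \<partial>(std_gauss :: (real^'d) measure))" for v w
    using integral_inner_right[OF integrable_std_gauss_half_space, of v w] by (simp only: inner_if)
  have pos_part: "(\<integral>x. (if v \<bullet> x \<ge> 0 then v \<bullet> x else 0) \<partial>std_gauss) = 1 / sqrt (2 * pi) * norm v"
    for v :: "real^'d"
  proof -
    have "max (v \<bullet> x) 0 = (if v \<bullet> x \<ge> 0 then v \<bullet> x else 0)" for x :: "real^'d"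
      by auto
    then show ?thesis using integral_std_gauss_inner_pos_part[of v] by simp
  qed
  \<comment> \<open>The mean \<open>m\<close> satisfies \<open>v \<bullet> m \<le> E (max (v \<bullet> x) 0) = norm v / sqrt (2 * pi)\<close>,
    with equality for \<open>v = u\<close>; this pins \<open>m\<close> down.\<close>
  have "(\<integral>x. (if u \<bullet> x \<ge> 0 then x else 0) \<partial>std_gauss) = ((1 / sqrt (2 * pi)) / norm u) *\<^sub>R u"
  proof (rule eq_scaleR_if_inner_le_norm[OF _ _ assms])
    fix v :: "real^'d"
    have "v \<bullet> (\<integral>x. (if u \<bullet> x \<ge> 0 then x else 0) \<partial>std_gauss)
        \<le> (\<integral>x. (if v \<bullet> x \<ge> 0 then v \<bullet> x else 0) \<partial>std_gauss)"
      unfolding inner by (rule integral_mono[OF int int]) auto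
    then show "v \<bullet> (\<integral>x. (if u \<bullet> x \<ge> 0 then x else 0) \<partial>std_gauss) \<le> 1 / sqrt (2 * pi) * norm v"
      by (simp only: pos_part)
  qed (simp only: inner pos_part)
  then show ?thesis by simp
qed

lemma integral_std_gauss_pref_step:
  assumes "\<theta>c \<noteq> 0" "\<theta>r \<noteq> 0"
  shows "(\<integral>x. pref_step \<theta>c \<theta>r x \<partial>std_gauss) = pref_step_mean \<theta>c \<theta>r"
  unfolding pref_step_def
  by (simp add: integrable_std_gauss_half_space integral_std_gauss_half_space assms
      pref_step_mean_def v_Delta_def scaleR_diff_right ac_simps)

section \<open>A moment generating function bound\<close>

lemma exp_le_second_order_taylor:
  fixes z :: real
  shows "exp z \<le> 1 + z + z\<^sup>2 / 2 + \<bar>z\<bar>^3 * exp \<bar>z\<bar> / 6"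
proof -
  obtain t where t: "\<bar>t\<bar> \<le> \<bar>z\<bar>" and exp_z: "exp z = (\<Sum>m<3. z ^ m / fact m) + exp t / fact 3 * z ^ 3"
    using Maclaurin_exp_le[of z 3] by blast
  have "(\<Sum>m<3. z ^ m / fact m) = 1 + z + z\<^sup>2 / 2"
    by (simp add: eval_nat_numeral fact_numeral power2_eq_square)
  moreover have "exp t / fact 3 * z ^ 3 \<le> exp t * \<bar>z\<bar>^3 / 6"
    using abs_ge_self[of "exp t / fact 3 * z ^ 3"] by (simp add: abs_mult power_abs fact_numeral)
  moreover have "exp t * \<bar>z\<bar>^3 / 6 \<le> exp \<bar>z\<bar> * \<bar>z\<bar>^3 / 6"
    using t by (intro divide_right_mono mult_right_mono) auto
  ultimately show ?thesis using exp_z by (simp add: ac_simps)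
qed

lemma exp_le_dominated_taylor:
  fixes l w y :: real
  assumes w: "\<bar>w\<bar> \<le> y" and l: "0 \<le> l" "l \<le> 1/4"
  shows "exp (l * w) \<le> 1 + l * w + l\<^sup>2 * y\<^sup>2 / 2 + l^3 / 6 * (y^3 * exp (y / 4))"
proof -
  have "0 \<le> y" using w by linarith
  have lw: "\<bar>l * w\<bar> \<le> l * y" using w l by (simp add: abs_mult mult_left_mono)
  have "(l * w)\<^sup>2 \<le> (l * y)\<^sup>2"
    using power_mono[OF lw, of 2] by simp
  moreover have "\<bar>l * w\<bar>^3 * exp \<bar>l * w\<bar> \<le> (l * y)^3 * exp (y / 4)"
  proof (rule mult_mono)
    show "\<bar>l * w\<bar>^3 \<le> (l * y)^3" using lw by (intro power_mono) auto
    show "exp \<bar>l * w\<bar> \<le> exp (y / 4)"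
      using lw mult_right_mono[OF l(2) \<open>0 \<le> y\<close>] by simp
  qed (use l \<open>0 \<le> y\<close> in auto)
  ultimately show ?thesis
    using exp_le_second_order_taylor[of "l * w"] by (simp add: power_mult_distrib field_simps)
qed

lemma std_normal_cube_exp_moment:
  "integrable lborel (\<lambda>t. std_normal_density t * (\<bar>t\<bar>^3 * exp (\<bar>t\<bar> / 4)))"
  "(\<integral>t. std_normal_density t * (\<bar>t\<bar>^3 * exp (\<bar>t\<bar> / 4)) \<partial>lborel) \<le> 12"
proof -
  define s :: real where "s = sqrt 2"
  have s: "0 < s" "s * s = 2" by (auto simp: s_def)
  \<comment> \<open>Completing the square, \<open>\<bar>t\<bar>/4 \<le> 1/16 + t\<^sup>2/4\<close>, turns the weight into that of \<open>N(0, 2)\<close>.\<close>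
  define g where "g t = exp (1/16) * s * (normal_density 0 s t * \<bar>t\<bar>^3)" for t
  have g_int: "has_bochner_integral lborel g (exp (1/16) * s * (2 * s^3 * sqrt (2 / pi)))"
    unfolding g_def using normal_moment_abs_odd[of s 0 1] s
    by (intro has_bochner_integral_mult_right) simp
  have le_g: "std_normal_density t * (\<bar>t\<bar>^3 * exp (\<bar>t\<bar> / 4)) \<le> g t" for t
  proof -
    have "\<bar>t\<bar> / 4 \<le> 1/16 + t\<^sup>2 / 4"
      using zero_le_power2[of "\<bar>t\<bar> / 2 - 1/4"] by (simp add: power2_eq_square algebra_simps)
    then have "exp (\<bar>t\<bar> / 4) \<le> exp (1/16) * exp (t\<^sup>2 / 4)"
      by (simp add: mult_exp_exp)
    then have "std_normal_density t * (\<bar>t\<bar>^3 * exp (\<bar>t\<bar> / 4))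
        \<le> exp (1/16) * (std_normal_density t * exp (t\<^sup>2 / 4)) * \<bar>t\<bar>^3"
      by (simp add: mult_left_mono ac_simps)
    also have "std_normal_density t * exp (t\<^sup>2 / 4) = s * normal_density 0 s t"
      using s by (simp add: normal_density_def std_normal_density_def mult_exp_exp real_sqrt_mult
          power2_eq_square s_def field_simps)
    finally show ?thesis by (simp add: g_def ac_simps)
  qed
  show int: "integrable lborel (\<lambda>t. std_normal_density t * (\<bar>t\<bar>^3 * exp (\<bar>t\<bar> / 4)))"
    using le_g by (intro Bochner_Integration.integrable_bound[OF integrable.intros[OF g_int]])
      (auto intro!: AE_I2 order_trans[OF le_g abs_ge_self])
  have "(\<integral>t. std_normal_density t * (\<bar>t\<bar>^3 * exp (\<bar>t\<bar> / 4)) \<partial>lborel) \<le> integral\<^sup>L lborel g"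
    by (rule integral_mono[OF int integrable.intros[OF g_int] le_g])
  also have "\<dots> = 8 * exp (1/16) * sqrt (2 / pi)"
    using has_bochner_integral_integral_eq[OF g_int] s by (simp add: power3_eq_cube s_def)
  also have "\<dots> \<le> 8 * (3/2) * 1"
  proof (intro mult_mono)
    show "exp (1/16 :: real) \<le> 3/2" using exp_bound_lemma[of "1/16 :: real"] by simp
    show "sqrt (2 / pi) \<le> 1" using pi_gt3 by simp
  qed auto
  finally show "(\<integral>t. std_normal_density t * (\<bar>t\<bar>^3 * exp (\<bar>t\<bar> / 4)) \<partial>lborel) \<le> 12"
    by simp
qed

lemma (in prob_space) exp_moment_le_of_abs_le_std_normal:
  assumes Y: "distributed M lborel Y std_normal_density"
    and W[measurable]: "W \<in> borel_measurable M"
    and W_le: "\<And>\<omega>. \<omega> \<in> space M \<Longrightarrow> \<bar>W \<omega>\<bar> \<le> \<bar>Y \<omega>\<bar>"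
    and l: "0 \<le> l" "l \<le> 1/4"
  shows "integrable M (\<lambda>\<omega>. exp (l * W \<omega>))"
    and "expectation (\<lambda>\<omega>. exp (l * W \<omega>)) \<le> exp (l * expectation W + l\<^sup>2 / 2 + 2 * l^3)"
proof -
  have [measurable]: "Y \<in> borel_measurable M"
    using distributed_measurable[OF Y] by simp
  define C where "C t = \<bar>t\<bar>^3 * exp (\<bar>t\<bar> / 4)" for t :: real
  define h where "h \<omega> = 1 + l * W \<omega> + l\<^sup>2 * (Y \<omega>)\<^sup>2 / 2 + l^3 / 6 * C (Y \<omega>)" for \<omega>
  have [measurable]: "C \<in> borel_measurable borel"
    unfolding C_def by measurable
  have int_C: "integrable M (\<lambda>\<omega>. C (Y \<omega>))" and E_C: "expectation (\<lambda>\<omega>. C (Y \<omega>)) \<le> 12"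
    using distributed_integrable[OF Y, of C] distributed_integral[OF Y, of C] std_normal_cube_exp_moment
    by (simp_all add: C_def)
  have int_sq: "integrable M (\<lambda>\<omega>. (Y \<omega>)\<^sup>2)" and E_sq: "expectation (\<lambda>\<omega>. (Y \<omega>)\<^sup>2) = 1"
    using distributed_integrable[OF Y, of power2] distributed_integral[OF Y, of power2]
      integrable_std_normal_moment[of 2] integral_std_normal_moment_even[of 1]
    by simp_all
  have "integrable M (\<lambda>\<omega>. \<bar>Y \<omega>\<bar>)"
    using distributed_integrable[OF Y, of abs] integrable_std_normal_moment_abs[of 1] by simp
  then have int_W: "integrable M W"
    by (rule Bochner_Integration.integrable_bound) (auto intro!: AE_I2 W_le)
  have int_h: "integrable M h"
    unfolding h_def by (intro Bochner_Integration.integrable_add integrable_mult_right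
        integrable_divide_zero int_W int_sq int_C) auto
  have exp_le_h: "exp (l * W \<omega>) \<le> h \<omega>" if "\<omega> \<in> space M" for \<omega>
    using exp_le_dominated_taylor[OF W_le[OF that] l] by (simp add: h_def C_def)
  show int_exp: "integrable M (\<lambda>\<omega>. exp (l * W \<omega>))"
    using int_h
    by (rule Bochner_Integration.integrable_bound) (auto intro!: AE_I2 order_trans[OF exp_le_h])
  have "expectation (\<lambda>\<omega>. exp (l * W \<omega>)) \<le> expectation h"
    using int_exp int_h exp_le_h by (rule integral_mono)
  also have "expectation h = 1 + l * expectation W + l\<^sup>2 / 2 + l^3 / 6 * expectation (\<lambda>\<omega>. C (Y \<omega>))"
    unfolding h_def using int_W int_sq int_C E_sq prob_space by simp
  also have "\<dots> \<le> 1 + (l * expectation W + l\<^sup>2 / 2 + 2 * l^3)"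
    using mult_left_mono[OF E_C, of "l^3"] l by simp
  also have "\<dots> \<le> exp (l * expectation W + l\<^sup>2 / 2 + 2 * l^3)"
    by (rule exp_ge_add_one_self)
  finally show "expectation (\<lambda>\<omega>. exp (l * W \<omega>)) \<le> exp (l * expectation W + l\<^sup>2 / 2 + 2 * l^3)" .
qed

lemma (in prob_space) nn_integral_exp_centered_le:
  assumes Y: "distributed M lborel Y std_normal_density"
    and W[measurable]: "W \<in> borel_measurable M"
    and W_le: "\<And>\<omega>. \<omega> \<in> space M \<Longrightarrow> \<bar>W \<omega>\<bar> \<le> \<bar>Y \<omega>\<bar>"
    and l: "0 \<le> l" "l \<le> 1/4"
  shows "(\<integral>\<^sup>+\<omega>. ennreal (exp (l * (W \<omega> - expectation W))) \<partial>M) \<le> ennreal (exp (l\<^sup>2 / 2 + 2 * l^3))"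
proof -
  note moment = exp_moment_le_of_abs_le_std_normal[OF Y W W_le l]
  have "(\<integral>\<^sup>+\<omega>. ennreal (exp (l * (W \<omega> - expectation W))) \<partial>M)
      = (\<integral>\<^sup>+\<omega>. ennreal (exp (- (l * expectation W)) * exp (l * W \<omega>)) \<partial>M)"
    by (simp add: mult_exp_exp algebra_simps)
  also have "\<dots> = ennreal (exp (- (l * expectation W)) * expectation (\<lambda>\<omega>. exp (l * W \<omega>)))"
    using moment(1) by (subst nn_integral_eq_integral) auto
  also have "\<dots> \<le> ennreal (exp (- (l * expectation W)) * exp (l * expectation W + l\<^sup>2 / 2 + 2 * l^3))"
    using moment(2) by (intro ennreal_leI mult_left_mono) auto
  also have "\<dots> = ennreal (exp (l\<^sup>2 / 2 + 2 * l^3))"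
    by (simp add: mult_exp_exp)
  finally show ?thesis .
qed

lemma nn_integral_std_gauss_exp_pref_step_le:
  fixes \<theta>c \<theta>r :: "real^'d"
  assumes \<theta>: "\<theta>c \<noteq> 0" "\<theta>r \<noteq> 0" and l: "0 \<le> l" "l \<le> 1/4" and s: "\<bar>s\<bar> \<le> 1"
  shows "(\<integral>\<^sup>+x. ennreal (exp (l * (s * (pref_step \<theta>c \<theta>r x $ j - pref_step_mean \<theta>c \<theta>r $ j)))) \<partial>std_gauss)
    \<le> ennreal (exp (l\<^sup>2 / 2 + 2 * l^3))"
proof -
  interpret prob_space "std_gauss :: (real^'d) measure"
    by (rule prob_space_std_gauss)
  define W where "W = (\<lambda>x. s * pref_step \<theta>c \<theta>r x $ j)"
  have W_meas: "W \<in> borel_measurable std_gauss"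
    unfolding W_def cart_eq_inner_axis by measurable
  have "integrable std_gauss (pref_step \<theta>c \<theta>r)"
    unfolding pref_step_def[abs_def]
    by (intro Bochner_Integration.integrable_diff integrable_std_gauss_half_space)
  then have E_W: "expectation W = s * pref_step_mean \<theta>c \<theta>r $ j"
    by (simp add: W_def cart_eq_inner_axis integral_std_gauss_pref_step \<theta>)
  have "\<bar>W x\<bar> \<le> \<bar>x $ j\<bar>" for x
  proof -
    have "\<bar>pref_step \<theta>c \<theta>r x $ j\<bar> \<le> \<bar>x $ j\<bar>"
      by (simp add: pref_step_def)
    then show ?thesis
      using mult_mono[OF s, of "\<bar>pref_step \<theta>c \<theta>r x $ j\<bar>" "\<bar>x $ j\<bar>"] by (simp add: W_def abs_mult)
  qed
  then have "(\<integral>\<^sup>+x. ennreal (exp (l * (W x - expectation W))) \<partial>std_gauss)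
      \<le> ennreal (exp (l\<^sup>2 / 2 + 2 * l^3))"
    by (intro nn_integral_exp_centered_le[OF distributed_std_gauss_coord W_meas _ l]) simp
  then show ?thesis
    unfolding E_W by (simp add: W_def right_diff_distrib)
qed

section \<open>Concentration of the random walk\<close>

lemma (in prob_space) emeasure_indep_sum_ge_le:
  assumes K: "finite K" and indep: "indep_vars (\<lambda>_. borel) V K" and l: "0 \<le> l"
    and mgf: "\<And>k. k \<in> K \<Longrightarrow> (\<integral>\<^sup>+\<omega>. ennreal (exp (l * V k \<omega>)) \<partial>M) \<le> ennreal (exp q)"
  shows "emeasure M {\<omega> \<in> space M. a \<le> (\<Sum>k\<in>K. V k \<omega>)} \<le> ennreal (exp (- l * a + real (card K) * q))"
proof -
  have [measurable]: "V k \<in> borel_measurable M" if "k \<in> K" for k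
    using indep that unfolding indep_vars_def by blast
  define E where "E = (\<lambda>k \<omega>. ennreal (exp (l * V k \<omega>)))"
  have indep_E: "indep_vars (\<lambda>_. borel) E K"
    unfolding E_def by (rule indep_vars_compose2[OF indep]) simp
  have "emeasure M {\<omega> \<in> space M. a \<le> (\<Sum>k\<in>K. V k \<omega>)}
      = (\<integral>\<^sup>+\<omega>. indicator {\<omega> \<in> space M. a \<le> (\<Sum>k\<in>K. V k \<omega>)} \<omega> \<partial>M)"
    by (rule nn_integral_indicator[symmetric]) (use K in measurable)
  also have "\<dots> \<le> (\<integral>\<^sup>+\<omega>. ennreal (exp (- l * a)) * (\<Prod>k\<in>K. E k \<omega>) \<partial>M)"
  proof (rule nn_integral_mono)
    fix \<omega>
    have "(\<Prod>k\<in>K. E k \<omega>) = ennreal (exp (l * (\<Sum>k\<in>K. V k \<omega>)))"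
      by (simp add: E_def prod_ennreal exp_sum[OF K] sum_distrib_left)
    moreover have "1 \<le> exp (- l * a) * exp (l * (\<Sum>k\<in>K. V k \<omega>))" if "a \<le> (\<Sum>k\<in>K. V k \<omega>)"
      using mult_left_mono[OF that l] by (simp add: mult_exp_exp)
    ultimately show "indicator {\<omega> \<in> space M. a \<le> (\<Sum>k\<in>K. V k \<omega>)} \<omega>
        \<le> ennreal (exp (- l * a)) * (\<Prod>k\<in>K. E k \<omega>)"
      by (auto simp: indicator_def ennreal_mult[symmetric] simp flip: ennreal_1 intro!: ennreal_leI)
  qed
  also have "\<dots> = ennreal (exp (- l * a)) * (\<Prod>k\<in>K. \<integral>\<^sup>+\<omega>. E k \<omega> \<partial>M)"
    using indep_vars_nn_integral[OF K indep_E] by (subst nn_integral_cmult) (auto simp: E_def)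
  also have "\<dots> \<le> ennreal (exp (- l * a)) * (\<Prod>k\<in>K. ennreal (exp q))"
    by (intro mult_left_mono prod_mono_ennreal) (auto simp: E_def mgf)
  also have "\<dots> = ennreal (exp (- l * a + real (card K) * q))"
    by (simp add: ennreal_mult[symmetric] ennreal_power mult_exp_exp flip: exp_of_nat_mult)
  finally show ?thesis .
qed

lemma chernoff_exponent_le:
  fixes N L :: real
  assumes N: "0 < N" and L: "0 < L"
  defines "x \<equiv> sqrt (2 * L / N)"
  shows "- (x / (1 + 4 * x)) * (sqrt (2 * N * L) + 4 * L)
      + N * ((x / (1 + 4 * x))\<^sup>2 / 2 + 2 * (x / (1 + 4 * x))^3) \<le> - L"
proof -
  define D where "D = 1 + 4 * x"
  have x: "0 < x" using N L by (simp add: x_def)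
  have D: "0 < D" using x by (simp add: D_def)
  have "x * sqrt (2 * N * L) = sqrt ((2 * L)\<^sup>2)"
    unfolding x_def real_sqrt_mult[symmetric] using N by (simp add: field_simps power2_eq_square)
  then have xR: "x * sqrt (2 * N * L) = 2 * L"
    using L real_sqrt_abs[of "2 * L"] by simp
  have Nx: "N * x\<^sup>2 = 2 * L"
    using N L by (simp add: x_def)
  have "- (x / D) * (sqrt (2 * N * L) + 4 * L) + N * ((x / D)\<^sup>2 / 2 + 2 * (x / D)^3)
      = - (2 * L + 4 * x * L) / D + (N * x\<^sup>2) * (1 / (2 * D\<^sup>2) + 2 * x / D^3)"
    using D xR by (simp add: field_simps power2_eq_square power3_eq_cube)
  also have "\<dots> = L * ((- 2 * (1 + 2 * x) * D\<^sup>2 + D + 4 * x) / D^3)"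
    unfolding Nx using D by (simp add: field_simps power2_eq_square power3_eq_cube)
  also have "- 2 * (1 + 2 * x) * D\<^sup>2 + D + 4 * x = - (D^3) - 16 * x\<^sup>2"
    unfolding D_def by (simp add: algebra_simps power2_eq_square power3_eq_cube)
  also have "L * ((- (D^3) - 16 * x\<^sup>2) / D^3) = - L - L * (16 * x\<^sup>2 / D^3)"
    using D by (simp add: field_simps)
  also have "\<dots> \<le> - L"
    using L D by simp
  finally show ?thesis unfolding D_def .
qed

lemma (in prob_space) prob_pref_step_deviation_le:
  fixes Z :: "'k \<Rightarrow> 'a \<Rightarrow> real^'d"
  assumes K: "finite K" "K \<noteq> {}" and indep: "indep_vars (\<lambda>_. borel) Z K"
    and Z: "\<And>k. k \<in> K \<Longrightarrow> distributed M lborel (Z k) std_gauss_density"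
    and \<theta>: "\<theta>c \<noteq> 0" "\<theta>r \<noteq> 0" and L: "0 < L" and s: "\<bar>s\<bar> \<le> 1"
  shows "prob {\<omega> \<in> space M. sqrt (2 * real (card K) * L) + 4 * L
      \<le> s * (\<Sum>k\<in>K. pref_step \<theta>c \<theta>r (Z k \<omega>) $ j - pref_step_mean \<theta>c \<theta>r $ j)} \<le> exp (- L)"
proof -
  define N where "N = real (card K)"
  have N: "0 < N" using K by (simp add: N_def card_gt_0_iff)
  define x where "x = sqrt (2 * L / N)"
  \<comment> \<open>This choice of \<open>l\<close> nearly minimises the Chernoff exponent \<open>- l a + N (l\<^sup>2/2 + 2 l\<^sup>3)\<close>.\<close>
  define l where "l = x / (1 + 4 * x)"
  have "0 \<le> x" using N L by (simp add: x_def)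
  then have l: "0 \<le> l" "l \<le> 1/4"
    unfolding l_def by (simp_all add: field_simps)
  define V where "V = (\<lambda>k \<omega>. s * (pref_step \<theta>c \<theta>r (Z k \<omega>) $ j - pref_step_mean \<theta>c \<theta>r $ j))"
  have indep_V: "indep_vars (\<lambda>_. borel) V K"
    unfolding V_def by (rule indep_vars_compose2[OF indep]) measurable
  have "(\<integral>\<^sup>+\<omega>. ennreal (exp (l * V k \<omega>)) \<partial>M) \<le> ennreal (exp (l\<^sup>2 / 2 + 2 * l^3))" if "k \<in> K" for k
  proof -
    define f where "f x = ennreal (exp (l * (s * (pref_step \<theta>c \<theta>r x $ j - pref_step_mean \<theta>c \<theta>r $ j))))"
      for x :: "real^'d"
    have [measurable]: "f \<in> borel_measurable lborel"
      unfolding f_def by measurable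
    have "distr M lborel (Z k) = std_gauss"
      using Z[OF that] by (simp add: distributed_def std_gauss_def)
    then have "(\<integral>\<^sup>+x. f x \<partial>std_gauss) = (\<integral>\<^sup>+\<omega>. f (Z k \<omega>) \<partial>M)"
      using nn_integral_distr[OF distributed_measurable[OF Z[OF that]], of f] by simp
    then have "(\<integral>\<^sup>+\<omega>. ennreal (exp (l * V k \<omega>)) \<partial>M) = (\<integral>\<^sup>+x. f x \<partial>std_gauss)"
      by (simp add: V_def f_def)
    also have "\<dots> \<le> ennreal (exp (l\<^sup>2 / 2 + 2 * l^3))"
      unfolding f_def by (rule nn_integral_std_gauss_exp_pref_step_le[OF \<theta> l s])
    finally show ?thesis .
  qed
  from emeasure_indep_sum_ge_le[OF K(1) indep_V l(1) this]
  have "emeasure M {\<omega> \<in> space M. sqrt (2 * N * L) + 4 * L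
      \<le> s * (\<Sum>k\<in>K. pref_step \<theta>c \<theta>r (Z k \<omega>) $ j - pref_step_mean \<theta>c \<theta>r $ j)}
      \<le> ennreal (exp (- l * (sqrt (2 * N * L) + 4 * L) + N * (l\<^sup>2 / 2 + 2 * l^3)))"
    by (simp add: V_def N_def sum_distrib_left)
  also have "\<dots> \<le> ennreal (exp (- L))"
    using chernoff_exponent_le[OF N L] by (simp add: l_def x_def)
  finally show ?thesis
    by (simp add: emeasure_eq_measure N_def)
qed

lemma norm_le_sqrt_card_if_components_le:
  fixes v :: "real^'n"
  assumes "\<And>j. \<bar>v $ j\<bar> \<le> a"
  shows "norm v \<le> sqrt (real CARD('n)) * a"
proof -
  have "infnorm v \<le> a"
    unfolding infnorm_cart using assms by (auto intro: cSup_least)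
  then show ?thesis
    using norm_le_infnorm[of v] by (simp add: mult_left_mono order_trans)
qed

lemma (in prob_space) prob_norm_le_ge_of_coordinate_tails:
  fixes S :: "'a \<Rightarrow> real^'n"
  assumes [measurable]: "S \<in> borel_measurable M"
    and tail: "\<And>j s. s \<in> {1, -1} \<Longrightarrow> prob {\<omega> \<in> space M. a \<le> s * S \<omega> $ j} \<le> p"
  shows "1 - 2 * real CARD('n) * p \<le> prob {\<omega> \<in> space M. norm (S \<omega>) \<le> sqrt (real CARD('n)) * a}"
proof -
  define A where "A = (\<lambda>(j, s). {\<omega> \<in> space M. a \<le> s * S \<omega> $ j})"
  define I where "I = (UNIV :: 'n set) \<times> {1, -1 :: real}"
  have [measurable]: "(\<lambda>\<omega>. S \<omega> $ j) \<in> borel_measurable M" for j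
    unfolding cart_eq_inner_axis by measurable
  have A_sets: "A q \<in> events" for q
    unfolding A_def by (cases q) simp
  have "prob (\<Union>q\<in>I. A q) \<le> (\<Sum>q\<in>I. prob (A q))"
    by (rule finite_measure_subadditive_finite) (auto simp: I_def A_sets)
  also have "\<dots> \<le> (\<Sum>q\<in>I. p)"
    by (intro sum_mono) (auto simp: I_def A_def intro: tail)
  also have "\<dots> = 2 * real CARD('n) * p"
    by (simp add: I_def card_cartesian_product)
  finally have "1 - 2 * real CARD('n) * p \<le> prob (space M - (\<Union>q\<in>I. A q))"
    by (subst prob_compl) (auto simp: I_def A_sets)
  also have "\<dots> \<le> prob {\<omega> \<in> space M. norm (S \<omega>) \<le> sqrt (real CARD('n)) * a}"
  proof (rule finite_measure_mono, safe)
    fix \<omega> assume \<omega>: "\<omega> \<in> space M" "\<omega> \<notin> (\<Union>q\<in>I. A q)"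
    have "\<bar>S \<omega> $ j\<bar> \<le> a" for j
    proof -
      have "\<omega> \<notin> A (j, 1)" "\<omega> \<notin> A (j, -1)"
        using \<omega> by (auto simp: I_def)
      then show ?thesis
        using \<omega> by (auto simp: A_def)
    qed
    then show "norm (S \<omega>) \<le> sqrt (real CARD('n)) * a"
      by (rule norm_le_sqrt_card_if_components_le)
  qed simp
  finally show ?thesis .
qed

lemma (in prob_space) prob_norm_pref_step_deviation_ge:
  fixes Z :: "'k \<Rightarrow> 'a \<Rightarrow> real^'d"
  assumes K: "finite K" "K \<noteq> {}" and indep: "indep_vars (\<lambda>_. borel) Z K"
    and Z: "\<And>k. k \<in> K \<Longrightarrow> distributed M lborel (Z k) std_gauss_density"
    and \<theta>: "\<theta>c \<noteq> 0" "\<theta>r \<noteq> 0" and L: "0 < L"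
  shows "1 - 2 * real CARD('d) * exp (- L) \<le> prob {\<omega> \<in> space M.
      norm (\<Sum>k\<in>K. pref_step \<theta>c \<theta>r (Z k \<omega>) - pref_step_mean \<theta>c \<theta>r)
        \<le> sqrt (real CARD('d)) * (sqrt (2 * real (card K) * L) + 4 * L)}"
proof (rule prob_norm_le_ge_of_coordinate_tails)
  have [measurable]: "Z k \<in> borel_measurable M" if "k \<in> K" for k
    using Z[OF that] by (simp add: distributed_def)
  show "(\<lambda>\<omega>. \<Sum>k\<in>K. pref_step \<theta>c \<theta>r (Z k \<omega>) - pref_step_mean \<theta>c \<theta>r) \<in> borel_measurable M"
    by (intro borel_measurable_sum) measurable
  fix j and s :: real assume "s \<in> {1, -1}"
  then show "prob {\<omega> \<in> space M. sqrt (2 * real (card K) * L) + 4 * L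
      \<le> s * (\<Sum>k\<in>K. pref_step \<theta>c \<theta>r (Z k \<omega>) - pref_step_mean \<theta>c \<theta>r) $ j} \<le> exp (- L)"
    using prob_pref_step_deviation_le[OF K indep Z \<theta> L, of s j] by (auto simp: sum_component)
qed

lemma norm_sgd_minus_pop_iter_le:
  fixes X :: "nat \<Rightarrow> nat \<Rightarrow> real^'d"
  assumes B: "1 \<le> B" and \<eta>: "0 \<le> \<eta>" and L: "0 \<le> L"
    and dev: "norm (\<Sum>k\<in>{..<T} \<times> {..<B}. pref_step \<theta>c \<theta>r (case_prod X k) - pref_step_mean \<theta>c \<theta>r)
      \<le> sqrt (real CARD('d)) * (sqrt (2 * (real T * real B) * L) + 4 * L)"
  shows "norm (sgd \<theta>c \<theta>r \<eta> B \<theta>0 X T - pop_iter \<theta>c \<theta>r \<eta> \<theta>0 T)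
    \<le> \<eta> * (sqrt (2 * real CARD('d) * real T / real B * L) + 4 * sqrt (real CARD('d)) * L)"
proof -
  define d where "d = real CARD('d)"
  have "sqrt (2 * d * real T / real B * L) = sqrt (d * (2 * (real T * real B) * L) / (real B)\<^sup>2)"
    using B by (simp add: field_simps power2_eq_square)
  also have "\<dots> = sqrt d * sqrt (2 * (real T * real B) * L) / real B"
    using B by (simp add: real_sqrt_divide real_sqrt_mult)
  finally have sqrt_eq:
    "sqrt d * sqrt (2 * (real T * real B) * L) / real B = sqrt (2 * d * real T / real B * L)" ..
  have "sqrt d * (4 * L) / real B \<le> 4 * sqrt d * L"
    using mult_right_mono[of 1 "real B" "sqrt d"] B L by (simp add: field_simps mult_left_mono d_def)
  then have "sqrt d * (sqrt (2 * (real T * real B) * L) + 4 * L) / real B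
      \<le> sqrt (2 * d * real T / real B * L) + 4 * sqrt d * L"
    by (simp add: distrib_left add_divide_distrib sqrt_eq)
  moreover have "norm (sgd \<theta>c \<theta>r \<eta> B \<theta>0 X T - pop_iter \<theta>c \<theta>r \<eta> \<theta>0 T)
      \<le> \<eta> * (sqrt d * (sqrt (2 * (real T * real B) * L) + 4 * L) / real B)"
    using mult_left_mono[OF dev, of "\<eta> / real B"] \<eta> by (simp add: sgd_minus_pop_iter[OF B] d_def)
  ultimately show ?thesis
    using \<eta> unfolding d_def by (meson mult_left_mono order_trans)
qed

theorem mainTheorem7:
  fixes M :: "'a measure"
    and X :: "nat \<Rightarrow> nat \<Rightarrow> 'a \<Rightarrow> real^'d"
    and \<theta>c \<theta>r \<theta>0 :: "real^'d"
    and \<eta> \<delta> :: real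
    and B T :: nat
  assumes "prob_space M"
    and "\<theta>c \<noteq> 0" and "\<theta>r \<noteq> 0"
    and "\<eta> > 0"
    and "B \<ge> 1" and "T \<ge> 1"
    and "0 < \<delta>" and "\<delta> < 1"
    and "real CARD('d) > ln (2 * real B * real T / \<delta>) / 4"
    and "prob_space.indep_vars M (\<lambda>_. borel) (\<lambda>(t, i). X t i) ({..<T} \<times> {..<B})"
    and "\<forall>t<T. \<forall>i<B. distributed M lborel (X t i) std_gauss_density"
  shows "measure M {\<omega> \<in> space M.
           norm (sgd \<theta>c \<theta>r \<eta> B \<theta>0 (\<lambda>t i. X t i \<omega>) T - pop_iter \<theta>c \<theta>r \<eta> \<theta>0 T)
             \<le> \<eta> * (sqrt (2 * real CARD('d) * real T / real B * ln (2 * (real CARD('d) + 1) / \<delta>))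
                    + 4 * sqrt (real CARD('d)) * ln (2 * (real CARD('d) + 1) / \<delta>))}
         \<ge> 1 - \<delta>"
proof -
  interpret prob_space M by fact
  define K where "K = {..<T} \<times> {..<B}"
  define d where "d = real CARD('d)"
  define L where "L = ln (2 * (d + 1) / \<delta>)"
  have "1 < 2 * (d + 1) / \<delta>" using \<open>\<delta> < 1\<close> \<open>0 < \<delta>\<close> by (simp add: d_def field_simps)
  then have L: "0 < L" by (simp add: L_def)
  have deviation_bound: "norm (sgd \<theta>c \<theta>r \<eta> B \<theta>0 (\<lambda>t i. X t i \<omega>) T - pop_iter \<theta>c \<theta>r \<eta> \<theta>0 T)
      \<le> \<eta> * (sqrt (2 * d * real T / real B * L) + 4 * sqrt d * L)"
    if "norm (\<Sum>k\<in>K. pref_step \<theta>c \<theta>r (case_prod X k \<omega>) - pref_step_mean \<theta>c \<theta>r)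
      \<le> sqrt d * (sqrt (2 * real (card K) * L) + 4 * L)" for \<omega>
    unfolding d_def using assms(4,5) L that
    by (intro norm_sgd_minus_pop_iter_le) (simp_all add: K_def d_def card_cartesian_product split_beta)
  have "2 * d * exp (- L) = \<delta> * (d / (d + 1))"
    using \<open>0 < \<delta>\<close> by (simp add: L_def d_def exp_minus field_simps)
  also have "\<dots> \<le> \<delta>" using \<open>0 < \<delta>\<close> by (intro mult_left_le) (simp_all add: d_def)
  finally have "1 - \<delta> \<le> 1 - 2 * d * exp (- L)" by simp
  also have "\<dots> \<le> prob {\<omega> \<in> space M. norm (\<Sum>k\<in>K. pref_step \<theta>c \<theta>r (case_prod X k \<omega>) - pref_step_mean \<theta>c \<theta>r)
      \<le> sqrt d * (sqrt (2 * real (card K) * L) + 4 * L)}"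
    unfolding d_def using assms(2,3,5,6,10,11) L
    by (intro prob_norm_pref_step_deviation_ge) (auto simp: K_def lessThan_empty_iff)
  also have "\<dots> \<le> prob {\<omega> \<in> space M. norm (sgd \<theta>c \<theta>r \<eta> B \<theta>0 (\<lambda>t i. X t i \<omega>) T - pop_iter \<theta>c \<theta>r \<eta> \<theta>0 T)
      \<le> \<eta> * (sqrt (2 * d * real T / real B * L) + 4 * sqrt d * L)}"
    by (rule finite_measure_mono) (use deviation_bound in blast,
      use assms(11) in \<open>measurable, intro sgd_measurable, auto simp: distributed_def\<close>)
  finally show ?thesis by (simp add: d_def L_def)
qed

end
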